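(* Let $K$ be a valued field and $d,r\ge1$. Then any finite set $X\subseteq K^d$ with $|X|\ge(d+1)(r-1)+1$ can be partitioned into sets $X_1,\dots,X_r$ with $|X_i|=d+1$ for $i<r$, $|X_r|=|X|-(d+1)(r-1)$, and $\operatorname{conv}(X_i)\supseteq\operatorname{conv}(X_j)$ for all $1\le i\le j\le r$. In particular $\bigcap_{i=1}^r\operatorname{conv}(X_i)\supseteq X_r\ne\emptyset$.
   Context: $K$ is a field with valuation $\nu$ and valuation ring $\mathcal{O}=\{x:\nu(x)\ge0\}$. For $Y\subseteq K^d$, $\operatorname{conv}(Y)=\{\sum_{i=1}^n\alpha_iy_i: n\ge1,y_i\in Y,\alpha_i\in\mathcal{O},\sum_i\alpha_i=1\}$. *)

theory Defs
  imports Main "HOL-Library.Cardinality"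
begin

text \<open>The value at 0 is the formal symbol infinity; we model this by only constraining
  nu on nonzero elements and treating 0 separately in the valuation ring.\<close>
definition valuation :: "('a::field \<Rightarrow> 'g::linordered_ab_group_add) \<Rightarrow> bool" where
  "valuation \<nu> \<longleftrightarrow>
     (\<forall>x y. x \<noteq> 0 \<longrightarrow> y \<noteq> 0 \<longrightarrow> \<nu> (x * y) = \<nu> x + \<nu> y) \<and>
     (\<forall>x y. x \<noteq> 0 \<longrightarrow> y \<noteq> 0 \<longrightarrow> x + y \<noteq> 0 \<longrightarrow> min (\<nu> x) (\<nu> y) \<le> \<nu> (x + y))"

definition val_ring :: "('a::field \<Rightarrow> 'g::linordered_ab_group_add) \<Rightarrow> 'a set" where
  "val_ring \<nu> = {x. x = 0 \<or> 0 \<le> \<nu> x}"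

text \<open>Points of K^d are functions 'n => 'a with 'n finite, d = CARD('n).
  conv(Y) = { sum_i alpha_i y_i : n >= 1, y_i in Y, alpha_i in O, sum alpha_i = 1 }.\<close>
definition vconv :: "('a::field \<Rightarrow> 'g::linordered_ab_group_add) \<Rightarrow> ('n \<Rightarrow> 'a) set \<Rightarrow> ('n \<Rightarrow> 'a) set" where
  "vconv \<nu> Y = {v. \<exists>(m::nat) (y::nat \<Rightarrow> 'n \<Rightarrow> 'a) (\<alpha>::nat \<Rightarrow> 'a).
      m \<ge> 1 \<and> (\<forall>i<m. y i \<in> Y) \<and> (\<forall>i<m. \<alpha> i \<in> val_ring \<nu>) \<and> (\<Sum>i<m. \<alpha> i) = 1 \<and>
      v = (\<lambda>j. \<Sum>i<m. \<alpha> i * y i j)}"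

end

theory Submission
  imports Defs "HOL-Analysis.Cartesian_Space" "HOL-Library.Disjoint_Sets"
begin

(* The valued hull conv is monotone and idempotent, since an O-combination of O-combinations
   is again one; so a point of Y lying in the hull of the other points can be dropped without
   changing conv Y. If |Y| >= d + 2, the points of Y are affinely dependent, and dividing an
   affine dependence by its coefficient of least valuation puts all coefficients into O, which
   exhibits one point as an O-combination of the others. Hence every finite Y with |Y| >= d + 1
   has a subset of exactly d + 1 points with the same hull. Splitting such a subset off the last
   block again and again yields blocks whose hulls contain the hull of everything split off
   later. *)

lemma linear_dependence_card_gt:
  fixes S :: "('m::finite \<Rightarrow> 'a::field) set"
  assumes "finite S" and "card S > CARD('m)"
  shows "\<exists>c. (\<forall>j. (\<Sum>v\<in>S. c v * v j) = 0) \<and> (\<exists>v\<in>S. c v \<noteq> 0)"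
proof -
  have inj: "inj_on vec_lambda S" by (auto simp: inj_on_def)
  have "vec.dim (vec_lambda ` S) \<le> vec.dim (UNIV :: ('a^'m) set)" by (rule vec.dim_subset) simp
  also have "\<dots> = CARD('m)" by (simp add: card_cart_basis)
  also have "\<dots> < card (vec_lambda ` S)" using assms(2) card_image[OF inj] by simp
  finally have "vec.dependent (vec_lambda ` S)" by (intro vec.dependent_biggerset_general)
  then obtain u where u: "\<exists>v\<in>vec_lambda ` S. u v \<noteq> 0" "(\<Sum>v\<in>vec_lambda ` S. u v *s v) = 0"
    using vec.dependent_finite[OF finite_imageI[OF assms(1)]] by blast
  have "(\<Sum>v\<in>S. u (vec_lambda v) * v j) = (\<Sum>v\<in>S. u (vec_lambda v) *s vec_lambda v) $ j" for j
    by (simp add: sum_component)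
  also have "\<dots> j = 0" for j using u(2) by (simp add: sum.reindex[OF inj] comp_def)
  finally show ?thesis using u(1) by (intro exI[of _ "\<lambda>v. u (vec_lambda v)"]) auto
qed

lemma affine_dependence_card_gt:
  fixes S :: "('n::finite \<Rightarrow> 'a::field) set"
  assumes "finite S" and "card S > CARD('n) + 1"
  shows "\<exists>c. sum c S = 0 \<and> (\<forall>j. (\<Sum>v\<in>S. c v * v j) = 0) \<and> (\<exists>v\<in>S. c v \<noteq> 0)"
proof -
  \<comment> \<open>An affine dependence of S is a linear dependence of the points (1, v), v in S.\<close>
  define lift :: "('n \<Rightarrow> 'a) \<Rightarrow> 'n option \<Rightarrow> 'a"
    where "lift v = case_option 1 v" for v
  have lift_Some: "lift v \<circ> Some = v" for v by (simp add: lift_def fun_eq_iff)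
  have inj: "inj_on lift S"
  proof (rule inj_onI)
    fix v w assume "lift v = lift w"
    then have "lift v \<circ> Some = lift w \<circ> Some" by (rule arg_cong)
    then show "v = w" by (simp only: lift_Some)
  qed
  have "CARD('n option) < card (lift ` S)" using assms(2) card_image[OF inj] by simp
  then obtain c where c: "\<forall>j. (\<Sum>w\<in>lift ` S. c w * w j) = 0" "\<exists>w\<in>lift ` S. c w \<noteq> 0"
    using linear_dependence_card_gt[OF finite_imageI[OF assms(1)]] by blast
  have lifted: "(\<Sum>v\<in>S. c (lift v) * lift v j) = 0" for j
    using c(1) by (simp add: sum.reindex[OF inj])
  have "sum (c \<circ> lift) S = 0" using lifted[of None] by (simp add: lift_def)
  moreover have "(\<Sum>v\<in>S. (c \<circ> lift) v * v j) = 0" for j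
    using lifted[of "Some j"] by (simp add: lift_def)
  moreover have "\<exists>v\<in>S. (c \<circ> lift) v \<noteq> 0" using c(2) by auto
  ultimately show ?thesis by blast
qed

lemma affine_dependence_solve:
  fixes S :: "('n \<Rightarrow> 'a::field) set"
  assumes "finite S" and "y \<in> S" and "c y \<noteq> 0"
    and "sum c S = 0" and "\<forall>j. (\<Sum>v\<in>S. c v * v j) = 0"
  shows "(\<Sum>v\<in>S - {y}. - (c v / c y)) = 1"
    and "y j = (\<Sum>v\<in>S - {y}. - (c v / c y) * v j)"
proof -
  have split: "(\<Sum>v\<in>S. f v) = f y + (\<Sum>v\<in>S - {y}. f v)" for f :: "_ \<Rightarrow> 'a"
    using assms(1,2) by (rule sum.remove)
  have "(\<Sum>v\<in>S - {y}. - (c v / c y)) = - (\<Sum>v\<in>S - {y}. c v) / c y"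
    by (simp add: sum_negf sum_divide_distrib)
  also have "(\<Sum>v\<in>S - {y}. c v) = - c y" using assms(4) split[of c] by (simp add: add_eq_0_iff)
  finally show "(\<Sum>v\<in>S - {y}. - (c v / c y)) = 1" using assms(3) by simp
  have comb: "c y * y j = - (\<Sum>v\<in>S - {y}. c v * v j)"
    using assms(5) split[of "\<lambda>v. c v * v j"] by (simp add: eq_neg_iff_add_eq_0)
  have "(\<Sum>v\<in>S - {y}. - (c v / c y) * v j) = - (\<Sum>v\<in>S - {y}. c v * v j) / c y"
    by (simp add: sum_divide_distrib[symmetric] sum_negf)
  also have "\<dots> = y j" using assms(3) by (simp add: comb[symmetric])
  finally show "y j = (\<Sum>v\<in>S - {y}. - (c v / c y) * v j)" by simp
qed

lemma vconv_mono: "Y \<subseteq> Z \<Longrightarrow> vconv \<nu> Y \<subseteq> vconv \<nu> Z"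
  unfolding vconv_def by blast

lemma vconv_sum:
  fixes A :: "'b set" and p :: "'b \<Rightarrow> 'n \<Rightarrow> 'a::field"
  assumes "finite A" "A \<noteq> {}" "\<forall>a\<in>A. p a \<in> Y" "\<forall>a\<in>A. c a \<in> val_ring \<nu>" "sum c A = 1"
  shows "(\<lambda>j. \<Sum>a\<in>A. c a * p a j) \<in> vconv \<nu> Y"
proof -
  obtain h where h: "bij_betw h {..<card A} A"
    using ex_bij_betw_nat_finite[OF assms(1)] by (auto simp: lessThan_atLeast0)
  have "(\<Sum>i<card A. c (h i)) = 1" "(\<lambda>j. \<Sum>a\<in>A. c a * p a j) = (\<lambda>j. \<Sum>i<card A. c (h i) * p (h i) j)"
    using assms(5) by (simp_all add: sum.reindex_bij_betw[OF h, symmetric])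
  moreover have "1 \<le> card A" using assms(1,2) by (simp add: Suc_le_eq card_gt_0_iff)
  moreover have "\<forall>i<card A. p (h i) \<in> Y \<and> c (h i) \<in> val_ring \<nu>"
    using bij_betwE[OF h] assms(3,4) by blast
  ultimately show ?thesis
    unfolding vconv_def by (intro CollectI exI[of _ "card A"] exI[of _ "p \<circ> h"] exI[of _ "c \<circ> h"]) simp
qed

locale valued_field =
  fixes \<nu> :: "'a::field \<Rightarrow> 'g::linordered_ab_group_add"
  assumes valuation: "valuation \<nu>"
begin

lemma val_mult: "x \<noteq> 0 \<Longrightarrow> y \<noteq> 0 \<Longrightarrow> \<nu> (x * y) = \<nu> x + \<nu> y"
  using valuation unfolding valuation_def by blast

lemma val_one: "\<nu> 1 = 0"
  using val_mult[of 1 1] by simp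

lemma val_minus_one: "\<nu> (-1) = 0"
  using val_mult[of "-1" "-1"] by (simp add: val_one)

lemma val_ring_one: "1 \<in> val_ring \<nu>"
  by (simp add: val_ring_def val_one)

lemma val_ring_mult: "x \<in> val_ring \<nu> \<Longrightarrow> y \<in> val_ring \<nu> \<Longrightarrow> x * y \<in> val_ring \<nu>"
  by (cases "x = 0 \<or> y = 0") (auto simp: val_ring_def val_mult)

lemma val_ring_uminus: "x \<in> val_ring \<nu> \<Longrightarrow> - x \<in> val_ring \<nu>"
  using val_ring_mult[of "-1" x] by (simp add: val_ring_def val_minus_one)

lemma val_ring_divide:
  assumes "x \<noteq> 0" "\<nu> x \<le> \<nu> y"
  shows "y / x \<in> val_ring \<nu>"
proof (cases "y = 0")
  case False
  then have "\<nu> y = \<nu> (y / x) + \<nu> x"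
    using assms(1) val_mult[of "y / x" x] by simp
  then show ?thesis using assms(2) by (simp add: val_ring_def)
qed (simp add: val_ring_def)

lemma subset_vconv: "Y \<subseteq> vconv \<nu> Y"
  unfolding vconv_def
  by (auto intro!: exI[of _ "1::nat"] exI[of _ "\<lambda>_. 1"] simp: val_ring_one)

lemma vconv_vconv_subset: "vconv \<nu> (vconv \<nu> Z) \<subseteq> vconv \<nu> Z"
proof
  fix v assume "v \<in> vconv \<nu> (vconv \<nu> Z)"
  then obtain m :: nat and p \<alpha> where m: "1 \<le> m" and p: "\<forall>i<m. p i \<in> vconv \<nu> Z"
    and \<alpha>: "\<forall>i<m. \<alpha> i \<in> val_ring \<nu>" "(\<Sum>i<m. \<alpha> i) = 1" and v: "v = (\<lambda>j. \<Sum>i<m. \<alpha> i * p i j)"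
    unfolding vconv_def by blast
  have "\<forall>i<m. \<exists>n w \<gamma>. 1 \<le> (n::nat) \<and> (\<forall>k<n. w k \<in> Z) \<and> (\<forall>k<n. \<gamma> k \<in> val_ring \<nu>)
      \<and> (\<Sum>k<n. \<gamma> k) = 1 \<and> p i = (\<lambda>j. \<Sum>k<n. \<gamma> k * w k j)"
    using p unfolding vconv_def by blast
  then obtain n :: "nat \<Rightarrow> nat" and w \<gamma> where "\<forall>i<m. 1 \<le> n i \<and> (\<forall>k<n i. w i k \<in> Z) \<and> (\<forall>k<n i. \<gamma> i k \<in> val_ring \<nu>)
      \<and> (\<Sum>k<n i. \<gamma> i k) = 1 \<and> p i = (\<lambda>j. \<Sum>k<n i. \<gamma> i k * w i k j)"
    unfolding choice_iff' by blast
  then have n: "\<And>i. i < m \<Longrightarrow> 1 \<le> n i"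
    and w: "\<And>i k. i < m \<Longrightarrow> k < n i \<Longrightarrow> w i k \<in> Z"
    and \<gamma>: "\<And>i k. i < m \<Longrightarrow> k < n i \<Longrightarrow> \<gamma> i k \<in> val_ring \<nu>" "\<And>i. i < m \<Longrightarrow> (\<Sum>k<n i. \<gamma> i k) = 1"
    and p_eq: "\<And>i. i < m \<Longrightarrow> p i = (\<lambda>j. \<Sum>k<n i. \<gamma> i k * w i k j)"
    by simp_all
  define A where "A = Sigma {..<m} (\<lambda>i. {..<n i})"
  define c where "c = (\<lambda>(i, k). \<alpha> i * \<gamma> i k)"
  define q where "q = (\<lambda>(i, k). w i k)"
  have sum_A: "sum g A = (\<Sum>i<m. \<Sum>k<n i. g (i, k))" for g :: "nat \<times> nat \<Rightarrow> 'a"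
    unfolding A_def by (subst sum.Sigma) auto
  have "(\<lambda>j. \<Sum>a\<in>A. c a * q a j) \<in> vconv \<nu> Z"
  proof (rule vconv_sum)
    show "finite A" by (simp add: A_def)
    have "(0, 0) \<in> A" using m n[of 0] by (simp add: A_def)
    then show "A \<noteq> {}" by blast
    show "\<forall>a\<in>A. q a \<in> Z" "\<forall>a\<in>A. c a \<in> val_ring \<nu>"
      using w \<alpha>(1) \<gamma>(1) by (auto simp: A_def c_def q_def intro: val_ring_mult)
    show "sum c A = 1"
      using \<gamma>(2) \<alpha>(2) by (simp add: sum_A c_def sum_distrib_left[symmetric])
  qed
  moreover have "(\<Sum>a\<in>A. c a * q a j) = v j" for j
    using p_eq by (simp add: sum_A c_def q_def v sum_distrib_left mult.assoc)
  ultimately show "v \<in> vconv \<nu> Z" by (simp add: fun_eq_iff)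
qed

lemma vconv_insert_absorb:
  assumes "y \<in> vconv \<nu> Z"
  shows "vconv \<nu> (insert y Z) = vconv \<nu> Z"
proof
  have "insert y Z \<subseteq> vconv \<nu> Z" using assms subset_vconv by blast
  then show "vconv \<nu> (insert y Z) \<subseteq> vconv \<nu> Z"
    using vconv_mono vconv_vconv_subset by blast
qed (rule vconv_mono, blast)

lemma affine_dependence_imp_mem_vconv_delete:
  assumes "finite S" and "sum c S = 0" and "\<forall>j. (\<Sum>v\<in>S. c v * v j) = 0" and "\<exists>v\<in>S. c v \<noteq> 0"
  shows "\<exists>y\<in>S. y \<in> vconv \<nu> (S - {y})"
proof -
  have "finite {v\<in>S. c v \<noteq> 0}" "{v\<in>S. c v \<noteq> 0} \<noteq> {}" using assms(1,4) by auto
  then obtain y where "is_arg_min (\<lambda>v. \<nu> (c v)) (\<lambda>v. v \<in> {v\<in>S. c v \<noteq> 0}) y"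
    using ex_is_arg_min_if_finite by blast
  then have y: "y \<in> S" "c y \<noteq> 0" and min: "\<And>v. v \<in> S \<Longrightarrow> c v \<noteq> 0 \<Longrightarrow> \<nu> (c y) \<le> \<nu> (c v)"
    by (simp_all add: is_arg_min_linorder)
  \<comment> \<open>Solving for the point whose coefficient has least valuation keeps all quotients in O.\<close>
  define \<beta> where "\<beta> v = - (c v / c y)" for v
  have \<beta>: "\<beta> v \<in> val_ring \<nu>" if "v \<in> S" for v
  proof (cases "c v = 0")
    case False
    then show ?thesis
      unfolding \<beta>_def using that y(2) min by (intro val_ring_uminus val_ring_divide)
  qed (simp add: \<beta>_def val_ring_def)
  note solve = affine_dependence_solve[OF assms(1) y assms(2,3)]
  have sum_\<beta>: "sum \<beta> (S - {y}) = 1" unfolding \<beta>_def by (rule solve(1))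
  have y_comb: "(\<lambda>j. \<Sum>v\<in>S - {y}. \<beta> v * v j) = y"
    unfolding \<beta>_def by (rule ext) (rule solve(2)[symmetric])
  have "S - {y} \<noteq> {}"
  proof
    assume "S - {y} = {}"
    then have "sum \<beta> (S - {y}) = 0" by (simp only: sum.empty)
    then show False using sum_\<beta> by simp
  qed
  then have "(\<lambda>j. \<Sum>v\<in>S - {y}. \<beta> v * v j) \<in> vconv \<nu> (S - {y})"
    using assms(1) \<beta> sum_\<beta> by (intro vconv_sum) auto
  then show ?thesis unfolding y_comb using y(1) by blast
qed

lemma vconv_caratheodory:
  fixes Y :: "('n::finite \<Rightarrow> 'a) set"
  assumes "finite Y"
  shows "\<exists>Y'\<subseteq>Y. card Y' \<le> CARD('n) + 1 \<and> vconv \<nu> Y' = vconv \<nu> Y"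
  using assms
proof (induction "card Y" arbitrary: Y rule: less_induct)
  case less
  show ?case
  proof (cases "card Y \<le> CARD('n) + 1")
    case True
    then show ?thesis by (intro exI[of _ Y]) simp
  next
    case False
    then obtain c where "sum c Y = 0" "\<forall>j. (\<Sum>v\<in>Y. c v * v j) = 0" "\<exists>v\<in>Y. c v \<noteq> 0"
      using affine_dependence_card_gt[OF less.prems] by auto
    then obtain y where y: "y \<in> Y" "y \<in> vconv \<nu> (Y - {y})"
      using affine_dependence_imp_mem_vconv_delete[OF less.prems] by blast
    have "card (Y - {y}) < card Y" using less.prems y(1) by (rule card_Diff1_less)
    then obtain Y' where Y': "Y' \<subseteq> Y - {y}" "card Y' \<le> CARD('n) + 1" "vconv \<nu> Y' = vconv \<nu> (Y - {y})"
      using less.hyps[of "Y - {y}"] less.prems by blast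
    have "vconv \<nu> (Y - {y}) = vconv \<nu> Y"
      using vconv_insert_absorb[OF y(2)] y(1) by (simp add: insert_absorb)
    with Y' show ?thesis by (intro exI[of _ Y']) auto
  qed
qed

lemma vconv_exists_subset_card_eq:
  fixes Y :: "('n::finite \<Rightarrow> 'a) set"
  assumes "finite Y" and "CARD('n) + 1 \<le> card Y"
  shows "\<exists>Y'\<subseteq>Y. card Y' = CARD('n) + 1 \<and> vconv \<nu> Y' = vconv \<nu> Y"
proof -
  obtain Y0 where Y0: "Y0 \<subseteq> Y" "card Y0 \<le> CARD('n) + 1" "vconv \<nu> Y0 = vconv \<nu> Y"
    using vconv_caratheodory[OF assms(1)] by blast
  obtain Y' where Y': "Y0 \<subseteq> Y'" "Y' \<subseteq> Y" "card Y' = CARD('n) + 1"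
    using exists_subset_between[OF Y0(2) assms(2) Y0(1) assms(1)] by blast
  have "vconv \<nu> Y' = vconv \<nu> Y"
    using vconv_mono[OF Y'(1), of \<nu>] vconv_mono[OF Y'(2), of \<nu>] Y0(3) by (intro subset_antisym) auto
  with Y' show ?thesis by blast
qed

end

lemma disjoint_family_on_split_last:
  assumes disj: "disjoint_family_on P {1..Suc k}" and "L1 \<subseteq> P (Suc k)"
  shows "disjoint_family_on (P(Suc k := L1, Suc (Suc k) := P (Suc k) - L1)) {1..Suc (Suc k)}"
    (is "disjoint_family_on ?Q _")
proof -
  have "disjoint_family_on ?Q {1..Suc k}"
  proof (rule disjoint_family_on_bisimulation[OF disj])
    fix l l' assume "l \<in> {1..Suc k}" "l' \<in> {1..Suc k}" "P l \<inter> P l' = {}"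
    then show "?Q l \<inter> ?Q l' = {}" using assms(2) by auto
  qed
  moreover have "?Q (Suc (Suc k)) \<inter> ?Q l = {}" if "l \<in> {1..Suc k}" for l
  proof (cases "l = Suc k")
    case False
    then have "P l \<inter> P (Suc k) = {}" using disjoint_family_onD[OF disj] that by auto
    then show ?thesis using that False by auto
  qed auto
  then have "?Q (Suc (Suc k)) \<inter> (\<Union>l\<in>{1..Suc k}. ?Q l) = {}" by blast
  moreover have "Suc (Suc k) \<notin> {1..Suc k}" by simp
  ultimately have "disjoint_family_on ?Q (insert (Suc (Suc k)) {1..Suc k})"
    by (simp add: disjoint_family_on_insert)
  moreover have "insert (Suc (Suc k)) {1..Suc k} = {1..Suc (Suc k)}" by auto
  ultimately show ?thesis by simp
qed

lemma antimono_chain_split_last: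
  fixes C :: "'a set \<Rightarrow> 'b set"
  assumes "mono C"
    and nested: "\<forall>i\<in>{1..Suc k}. \<forall>j\<in>{1..Suc k}. i \<le> j \<longrightarrow> C (P j) \<subseteq> C (P i)"
    and "L1 \<subseteq> P (Suc k)" and "C (P (Suc k)) \<subseteq> C L1"
  defines "Q \<equiv> P(Suc k := L1, Suc (Suc k) := P (Suc k) - L1)"
  shows "\<forall>i\<in>{1..Suc (Suc k)}. \<forall>j\<in>{1..Suc (Suc k)}. i \<le> j \<longrightarrow> C (Q j) \<subseteq> C (Q i)"
proof (intro ballI impI)
  fix i j assume i: "i \<in> {1..Suc (Suc k)}" and j: "j \<in> {1..Suc (Suc k)}" and "i \<le> j"
  have "C L1 = C (P (Suc k))" using assms(3,4) monoD[OF assms(1)] by blast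
  then have same: "C (Q l) = C (P l)" if "l \<le> Suc k" for l
    using that by (simp add: Q_def)
  have last: "C (Q j) \<subseteq> C (P (min j (Suc k)))"
  proof (cases "j \<le> Suc k")
    case False
    then have "j = Suc (Suc k)" using j by simp
    moreover have "C (P (Suc k) - L1) \<subseteq> C (P (Suc k))" by (rule monoD[OF assms(1)]) blast
    ultimately show ?thesis by (simp add: Q_def)
  qed (use same in \<open>simp add: min_def\<close>)
  show "C (Q j) \<subseteq> C (Q i)"
  proof (cases "i \<le> Suc k")
    case True
    have "C (P (min j (Suc k))) \<subseteq> C (P i)"
      using True i j \<open>i \<le> j\<close> by (intro nested[rule_format]) auto
    with last show ?thesis using same[OF True] by blast
  next
    case False
    then have "i = j" using \<open>i \<le> j\<close> j by simp
    then show ?thesis by simp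
  qed
qed

lemma nested_partition_exists:
  fixes C :: "'a set \<Rightarrow> 'b set"
  assumes "mono C"
    and shrink: "\<And>Y. Y \<subseteq> X \<Longrightarrow> d \<le> card Y \<Longrightarrow> \<exists>Y'\<subseteq>Y. card Y' = d \<and> C Y \<subseteq> C Y'"
    and "finite X" and "d * k \<le> card X"
  shows "\<exists>P. (\<Union>i\<in>{1..Suc k}. P i) = X \<and> disjoint_family_on P {1..Suc k}
    \<and> (\<forall>i\<in>{1..k}. card (P i) = d) \<and> card (P (Suc k)) = card X - d * k
    \<and> (\<forall>i\<in>{1..Suc k}. \<forall>j\<in>{1..Suc k}. i \<le> j \<longrightarrow> C (P j) \<subseteq> C (P i))"
  using assms(4)
proof (induction k)
  case 0
  show ?case by (intro exI[of _ "\<lambda>_. X"]) (simp add: disjoint_family_on_def)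
next
  case (Suc k)
  then obtain P where union: "(\<Union>i\<in>{1..Suc k}. P i) = X" and disj: "disjoint_family_on P {1..Suc k}"
    and card: "\<forall>i\<in>{1..k}. card (P i) = d" and card_last: "card (P (Suc k)) = card X - d * k"
    and nested: "\<forall>i\<in>{1..Suc k}. \<forall>j\<in>{1..Suc k}. i \<le> j \<longrightarrow> C (P j) \<subseteq> C (P i)"
    by auto
  let ?L = "P (Suc k)"
  have "?L \<subseteq> X" using union by auto
  moreover have "d \<le> card ?L" using Suc.prems card_last by simp
  ultimately obtain L1 where L1: "L1 \<subseteq> ?L" "card L1 = d" "C ?L \<subseteq> C L1"
    using shrink by blast
  define Q where "Q = P(Suc k := L1, Suc (Suc k) := ?L - L1)"
  have "(\<Union>i\<in>{1..Suc (Suc k)}. Q i) = (\<Union>i\<in>{1..k}. P i) \<union> L1 \<union> (?L - L1)"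
    by (auto simp: Q_def atLeastAtMostSuc_conv)
  also have "\<dots> = X" using union L1(1) by (auto simp: atLeastAtMostSuc_conv)
  finally have "(\<Union>i\<in>{1..Suc (Suc k)}. Q i) = X" .
  moreover have "disjoint_family_on Q {1..Suc (Suc k)}"
    unfolding Q_def using disj L1(1) by (rule disjoint_family_on_split_last)
  moreover have "\<forall>i\<in>{1..Suc k}. card (Q i) = d" using card L1(2) by (simp add: Q_def)
  moreover have "card (Q (Suc (Suc k))) = card X - d * Suc k"
    using card_last L1 finite_subset[OF \<open>?L \<subseteq> X\<close> assms(3)]
    by (simp add: Q_def card_Diff_subset finite_subset diff_diff_left)
  moreover have "\<forall>i\<in>{1..Suc (Suc k)}. \<forall>j\<in>{1..Suc (Suc k)}. i \<le> j \<longrightarrow> C (Q j) \<subseteq> C (Q i)"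
    unfolding Q_def using assms(1) nested L1(1,3) by (rule antimono_chain_split_last)
  ultimately show ?case by blast
qed

theorem theorem4p15:
  fixes \<nu> :: "'a::field \<Rightarrow> 'g::linordered_ab_group_add"
    and X :: "('n::finite \<Rightarrow> 'a) set"
    and r :: nat
  assumes "valuation \<nu>"
    and "r \<ge> 1"
    and "finite X"
    and "card X \<ge> (CARD('n) + 1) * (r - 1) + 1"
  shows "\<exists>P :: nat \<Rightarrow> ('n \<Rightarrow> 'a) set.
           (\<Union>i\<in>{1..r}. P i) = X \<and>
           (\<forall>i\<in>{1..r}. \<forall>j\<in>{1..r}. i \<noteq> j \<longrightarrow> P i \<inter> P j = {}) \<and>
           (\<forall>i\<in>{1..<r}. card (P i) = CARD('n) + 1) \<and>
           card (P r) = card X - (CARD('n) + 1) * (r - 1) \<and>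
           (\<forall>i\<in>{1..r}. \<forall>j\<in>{1..r}. i \<le> j \<longrightarrow> vconv \<nu> (P j) \<subseteq> vconv \<nu> (P i)) \<and>
           P r \<noteq> {} \<and> P r \<subseteq> (\<Inter>i\<in>{1..r}. vconv \<nu> (P i))"
proof -
  interpret valued_field \<nu> by unfold_locales (rule assms(1))
  obtain k where r: "r = Suc k" using assms(2) by (cases r) auto
  have mono: "mono (vconv \<nu>)" by (rule monoI) (rule vconv_mono)
  have shrink: "\<exists>Y'\<subseteq>Y. card Y' = CARD('n) + 1 \<and> vconv \<nu> Y \<subseteq> vconv \<nu> Y'"
    if "Y \<subseteq> X" and "CARD('n) + 1 \<le> card Y" for Y
    using vconv_exists_subset_card_eq[OF finite_subset[OF that(1) assms(3)] that(2)] by auto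
  have "(CARD('n) + 1) * k \<le> card X" using assms(4) r by simp
  from nested_partition_exists[OF mono shrink assms(3) this] obtain P
    where union: "(\<Union>i\<in>{1..Suc k}. P i) = X" and disj: "disjoint_family_on P {1..Suc k}"
      and card: "\<forall>i\<in>{1..k}. card (P i) = CARD('n) + 1"
      and card_last: "card (P (Suc k)) = card X - (CARD('n) + 1) * k"
      and nested: "\<forall>i\<in>{1..Suc k}. \<forall>j\<in>{1..Suc k}. i \<le> j \<longrightarrow> vconv \<nu> (P j) \<subseteq> vconv \<nu> (P i)"
    by blast
  have nonempty: "P (Suc k) \<noteq> {}" using card_last assms(4) r by (intro notI) simp
  have "P (Suc k) \<subseteq> (\<Inter>i\<in>{1..Suc k}. vconv \<nu> (P i))"
  proof (rule INT_greatest)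
    fix i assume "i \<in> {1..Suc k}"
    then have "vconv \<nu> (P (Suc k)) \<subseteq> vconv \<nu> (P i)" by (intro nested[rule_format]) auto
    then show "P (Suc k) \<subseteq> vconv \<nu> (P i)" using subset_vconv by blast
  qed
  moreover have "{1..<Suc k} = {1..k}" by auto
  ultimately show ?thesis
    unfolding r using union disj card card_last nested nonempty
    by (intro exI[of _ P]) (simp add: disjoint_family_on_def)
qed

end
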